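(* Consider a run of the Exponential Averaging with Predictions algorithm with parameter $\alpha\ge1$ on an instance of Display Ads with free disposal, with a prediction that is a feasible allocation. Then $$\mathrm{PRD}\ \le\ \sum_a\left((B_a-\ell_a)\,\beta_a^{(T)}+\frac{1}{\alpha_B}\sum_{t\in \mathbf X_a\setminus \mathbf P_a}\left(w_{at}-\beta_a^{(t-1)}\right)+\sum_{t\in\mathbf P_a\cap\mathbf X_a}w_{at}\right),$$ where the outer sum ranges over all advertisers (including the dummy advertiser).
   Context: Display Ads with free disposal: there are real advertisers $a\in\{1,\dots,k\}$ with integer budgets $B_a\ge 1$, plus a dummy advertiser $a=0$ with budget at least the total number of impressions and value $0$ for every impression. Impressions $t=1,\dots,T$ arrive online; when $t$ arrives, the values $w_{at}\ge 0$ for all $a$ are revealed (with $w_{0t}=0$) and $t$ must be assigned immediately to one advertiser. A prediction is a fixed feasible allocation (each impression assigned to one advertiser, each real advertiser $a$ receiving at most $B_a$ impressions); $\mathrm{PRD}(t)$ denotes the advertiser the prediction assigns $t$ to, revealed on arrival of $t$, and $\mathrm{PRD}$ also denotes the total value of the predicted allocation. Algorithm, parameter $\alpha\ge1$: let $B:=\min_a B_a$ over real advertisers, $e_B:=(1+1/B)^B$, $\alpha_B:=B(e_B^{\alpha/B}-1)$, and for each advertiser $e_{B_a}:=(1+1/B_a)^{B_a}$. Initially each advertiser $a$ holds a multiset $S_a$ of $B_a$ zero-value impressions and $\beta_a=0$. When $t$ arrives: $a_P:=\mathrm{PRD}(t)$; $a_E$ is any maximizer of $w_{at}-\beta_a$;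 if $\alpha_B(w_{a_Pt}-\beta_{a_P})\ge w_{a_Et}-\beta_{a_E}$ then $a:=a_P$, else $a:=a_E$. Add $t$ to $S_a$, remove an element of minimum value from $S_a$, and with $w_1\le\dots\le w_{B_a}$ the values in $S_a$ set $\beta_a:=\frac{e_{B_a}^{\alpha/B_a}-1}{e_{B_a}^{\alpha}-1}\sum_{i=1}^{B_a}w_ie_{B_a}^{\alpha(B_a-i)/B_a}$. Notation: $\beta_a^{(t)}$ is the value of $\beta_a$ after processing impression $t$ ($\beta_a^{(0)}=0$); $a^{(t)}$ is the advertiser the algorithm assigns $t$ to; $\mathbf X_a:=\{t: a^{(t)}=a\}$; $\mathbf P_a:=\{t:\mathrm{PRD}(t)=a\}$; $\ell_a:=|\mathbf P_a\cap\mathbf X_a|$. *)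

theory Defs
  imports Complex_Main "HOL-Library.Multiset"
begin

text \<open>Advertisers are naturals 0..k (0 = dummy), impressions are naturals 1..T.
  Values: w a t.  State after impression t: S t a, the multiset of values held by a.\<close>

definition eB :: "nat \<Rightarrow> real" where
  "eB n = (1 + 1 / real n) ^ n"

definition beta_of :: "real \<Rightarrow> nat \<Rightarrow> real multiset \<Rightarrow> real" where
  "beta_of \<alpha> n M =
     (eB n powr (\<alpha> / real n) - 1) / (eB n powr \<alpha> - 1) *
     (\<Sum>i = 1..n. sorted_list_of_multiset M ! (i - 1) * eB n powr (\<alpha> * (real n - real i) / real n))"

definition alphaB :: "real \<Rightarrow> nat \<Rightarrow> real" where
  "alphaB \<alpha> n = real n * (eB n powr (\<alpha> / real n) - 1)"

definition add_drop_min :: "real \<Rightarrow> real multiset \<Rightarrow> real multiset" where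
  "add_drop_min v M = (let M' = add_mset v M in M' - {# Min (set_mset M') #})"

text \<open>A run of Exponential Averaging with Predictions (any tie-breaking for a_E).\<close>
definition ea_run ::
  "real \<Rightarrow> nat \<Rightarrow> nat \<Rightarrow> (nat \<Rightarrow> nat) \<Rightarrow> (nat \<Rightarrow> nat \<Rightarrow> real) \<Rightarrow> (nat \<Rightarrow> nat)
   \<Rightarrow> (nat \<Rightarrow> nat) \<Rightarrow> (nat \<Rightarrow> nat \<Rightarrow> real multiset) \<Rightarrow> bool" where
  "ea_run \<alpha> k T B w prd asg S \<longleftrightarrow>
     (\<forall>a. S 0 a = replicate_mset (B a) 0) \<and>
     (\<forall>t \<in> {1..T}.
        (\<exists>aE \<le> k.
           (\<forall>a \<le> k. w a t - beta_of \<alpha> (B a) (S (t - 1) a)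
                      \<le> w aE t - beta_of \<alpha> (B aE) (S (t - 1) aE)) \<and>
           asg t = (if alphaB \<alpha> (Min (B ` {1..k})) *
                        (w (prd t) t - beta_of \<alpha> (B (prd t)) (S (t - 1) (prd t)))
                      \<ge> w aE t - beta_of \<alpha> (B aE) (S (t - 1) aE)
                    then prd t else aE)) \<and>
        (\<forall>a. S t a = (if a = asg t then add_drop_min (w a t) (S (t - 1) a) else S (t - 1) a)))"

end

theory Submission
  imports Defs
begin

text \<open>Charge every impression t to PRD(t). If the algorithm followed the prediction, the value
  w_{PRD(t),t} is collected in the last sum. Otherwise the assignment rule failed, so
  w_{PRD(t),t} - \<beta>_{PRD(t)}^{(t-1)} < (w_{a t} - \<beta>_a^{(t-1)}) / \<alpha>_B for the chosen a, and
  \<beta>_{PRD(t)}^{(t-1)} \<le> \<beta>_{PRD(t)}^{(T)} because the thresholds only grow: replacing the minimum of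
  the held multiset by a new value can only raise each order statistic. Since PRD is feasible and
  \<beta> \<ge> 0, an advertiser a is charged \<beta>_a^{(T)} for at most B_a - \<ell>_a impressions.\<close>

lemma nth_Cons_le_nth_insort:
  fixes xs :: "'a::linorder list"
  assumes "sorted xs" "\<forall>y\<in>set xs. m \<le> y" "m \<le> v" "i \<le> length xs"
  shows "(m # xs) ! i \<le> insort v xs ! i"
  using assms
proof (induction xs arbitrary: m i)
  case Nil
  then show ?case by simp
next
  case (Cons x xs)
  show ?case
  proof (cases "v \<le> x")
    case True
    then show ?thesis using Cons.prems by (cases i) auto
  next
    case False
    then show ?thesis
      using Cons.prems Cons.IH[of x "i - 1"] by (cases i) auto
  qed
qed

lemma length_sorted_list_of_multiset [simp]: "length (sorted_list_of_multiset M) = size M"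
  by (metis mset_sorted_list_of_multiset size_mset)

lemma size_add_drop_min [simp]: "size (add_drop_min v M) = size M"
proof -
  have "Min (set_mset (add_mset v M)) \<in># add_mset v M"
    by (metis Min_in finite_set_mset insert_not_empty set_mset_add_mset_insert)
  then show ?thesis
    unfolding add_drop_min_def Let_def by (simp add: size_Diff_submset)
qed

lemma set_mset_add_drop_min: "set_mset (add_drop_min v M) \<subseteq> insert v (set_mset M)"
  unfolding add_drop_min_def Let_def by (metis in_diffD set_mset_add_mset_insert subsetI)

lemma sorted_list_of_multiset_add_drop_min_ge:
  fixes M :: "real multiset"
  assumes "i < size M"
  shows "sorted_list_of_multiset M ! i \<le> sorted_list_of_multiset (add_drop_min v M) ! i"
proof (cases "v \<le> Min (set_mset M)")
  case True
  then have "Min (set_mset (add_mset v M)) = v"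
    by (cases "M = {#}") simp_all
  then show ?thesis by (simp add: add_drop_min_def)
next
  case False
  define m where "m = Min (set_mset M)"
  define xs where "xs = sorted_list_of_multiset (M - {#m#})"
  have "M \<noteq> {#}" using assms by auto
  then have m_in: "m \<in># M" and m_le: "\<forall>y\<in>#M. m \<le> y" by (simp_all add: m_def)
  have "Min (set_mset (add_mset v M)) = min v m"
    using \<open>M \<noteq> {#}\<close> by (simp add: m_def)
  also have "\<dots> = m"
    using False by (simp add: m_def min_absorb2)
  finally have "Min (set_mset (add_mset v M)) = m" .
  then have new: "add_drop_min v M = add_mset v (M - {#m#})"
    using m_in False by (simp add: add_drop_min_def m_def)
  have xs_ge: "\<forall>y\<in>set xs. m \<le> y"
    using m_le by (auto simp: xs_def dest: in_diffD)
  have "sorted_list_of_multiset M = insort m xs"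
    using m_in by (metis insert_DiffM sorted_list_of_multiset_insert xs_def)
  also have "\<dots> = m # xs"
    using xs_ge by (intro insort_is_Cons) auto
  finally have old: "sorted_list_of_multiset M = m # xs" .
  have "i \<le> length xs"
    using assms arg_cong[OF old, of length] by simp
  moreover have "sorted_list_of_multiset (add_drop_min v M) = insort v xs"
    by (simp add: new xs_def)
  ultimately show ?thesis
    using nth_Cons_le_nth_insort[of xs m v i] xs_ge False old by (simp add: xs_def m_def)
qed

lemma eB_ge_1: "1 \<le> eB n"
  unfolding eB_def by simp

lemma eB_gt_1: "1 \<le> n \<Longrightarrow> 1 < eB n"
  unfolding eB_def by (intro one_less_power) auto

lemma alphaB_pos: "1 \<le> n \<Longrightarrow> 0 < \<alpha> \<Longrightarrow> 0 < alphaB \<alpha> n"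
  unfolding alphaB_def using eB_gt_1 by simp

lemma beta_of_coeff_nonneg:
  "0 \<le> \<alpha> \<Longrightarrow> 0 \<le> (eB n powr (\<alpha> / real n) - 1) / (eB n powr \<alpha> - 1)"
  using ge_one_powr_ge_zero[OF eB_ge_1] by simp

lemma beta_of_mono:
  fixes M M' :: "real multiset"
  assumes "0 \<le> \<alpha>" "size M = n"
    and "\<forall>i<n. sorted_list_of_multiset M ! i \<le> sorted_list_of_multiset M' ! i"
  shows "beta_of \<alpha> n M \<le> beta_of \<alpha> n M'"
  unfolding beta_of_def
proof (rule mult_left_mono[OF sum_mono beta_of_coeff_nonneg[OF assms(1)]])
  fix i assume "i \<in> {1..n}"
  then show "sorted_list_of_multiset M ! (i - 1) * eB n powr (\<alpha> * (real n - real i) / real n)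
      \<le> sorted_list_of_multiset M' ! (i - 1) * eB n powr (\<alpha> * (real n - real i) / real n)"
    using assms(3) by (intro mult_right_mono) auto
qed

lemma beta_of_nonneg:
  fixes M :: "real multiset"
  assumes "0 \<le> \<alpha>" "size M = n" "\<forall>x\<in>#M. 0 \<le> x"
  shows "0 \<le> beta_of \<alpha> n M"
  unfolding beta_of_def
proof (rule mult_nonneg_nonneg[OF beta_of_coeff_nonneg[OF assms(1)] sum_nonneg])
  fix i assume "i \<in> {1..n}"
  then have "i - 1 < length (sorted_list_of_multiset M)"
    using assms(2) by auto
  then have "sorted_list_of_multiset M ! (i - 1) \<in># M"
    by (metis nth_mem set_sorted_list_of_multiset)
  then show "0 \<le> sorted_list_of_multiset M ! (i - 1) * eB n powr (\<alpha> * (real n - real i) / real n)"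
    using assms(3) by simp
qed

lemma sum_group_by_label:
  assumes "finite I" "finite L" "\<forall>t\<in>I. g t \<in> L"
  shows "(\<Sum>t\<in>I. f (g t) t) = (\<Sum>a\<in>L. \<Sum>t\<in>{t\<in>I. g t = a}. f a t)"
proof -
  have "(\<Sum>t\<in>I. f (g t) t) = (\<Sum>a\<in>L. \<Sum>t\<in>{t\<in>I. g t = a}. f (g t) t)"
    using assms by (intro sum.group[symmetric]) auto
  also have "\<dots> = (\<Sum>a\<in>L. \<Sum>t\<in>{t\<in>I. g t = a}. f a t)"
    by (intro sum.cong) auto
  finally show ?thesis .
qed

text \<open>In the application b a is the final threshold \<beta>_a^{(T)} and h a t the gain
  w_{at} - \<beta>_a^{(t-1)}.\<close>

lemma sum_prediction_le_charges:
  fixes v h :: "nat \<Rightarrow> nat \<Rightarrow> real" and b :: "nat \<Rightarrow> real" and cap :: "nat \<Rightarrow> nat"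
  assumes fin: "finite I" "finite L"
    and labels: "\<forall>t\<in>I. prd t \<in> L" "\<forall>t\<in>I. asg t \<in> L"
    and cap: "\<forall>a\<in>L. card {t\<in>I. prd t = a} \<le> cap a"
    and b_nonneg: "\<forall>a\<in>L. 0 \<le> b a"
    and deviation: "\<forall>t\<in>I. asg t \<noteq> prd t \<longrightarrow> v (prd t) t \<le> b (prd t) + c * h (asg t) t"
  defines "P a \<equiv> {t\<in>I. prd t = a}" and "X a \<equiv> {t\<in>I. asg t = a}"
  shows "(\<Sum>t\<in>I. v (prd t) t) \<le>
    (\<Sum>a\<in>L. (real (cap a) - real (card (P a \<inter> X a))) * b a
       + c * (\<Sum>t \<in> X a - P a. h a t) + (\<Sum>t \<in> P a \<inter> X a. v a t))"
proof -
  define A where "A = {t\<in>I. asg t = prd t}"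
  define N where "N = {t\<in>I. asg t \<noteq> prd t}"
  have finP: "finite (P a)" for a using fin by (simp add: P_def)
  have "(\<Sum>t\<in>I. v (prd t) t) = (\<Sum>t\<in>A. v (prd t) t) + (\<Sum>t\<in>N. v (prd t) t)"
    using fin by (subst sum.union_disjoint[symmetric]) (auto simp: A_def N_def intro: sum.cong)
  moreover have "(\<Sum>t\<in>A. v (prd t) t) = (\<Sum>a\<in>L. \<Sum>t \<in> P a \<inter> X a. v a t)"
  proof -
    have "{t\<in>A. prd t = a} = P a \<inter> X a" for a by (auto simp: A_def P_def X_def)
    then show ?thesis
      using fin labels by (subst sum_group_by_label[where L = L]) (auto simp: A_def)
  qed
  moreover have "(\<Sum>t\<in>N. v (prd t) t) \<le> (\<Sum>t\<in>N. b (prd t)) + c * (\<Sum>t\<in>N. h (asg t) t)"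
  proof -
    have "(\<Sum>t\<in>N. v (prd t) t) \<le> (\<Sum>t\<in>N. b (prd t) + c * h (asg t) t)"
      using deviation by (intro sum_mono) (auto simp: N_def)
    then show ?thesis by (simp add: sum.distrib sum_distrib_left)
  qed
  moreover have "(\<Sum>t\<in>N. b (prd t)) \<le> (\<Sum>a\<in>L. (real (cap a) - real (card (P a \<inter> X a))) * b a)"
  proof -
    have "{t\<in>N. prd t = a} = P a - X a" for a by (auto simp: N_def P_def X_def)
    then have "(\<Sum>t\<in>N. b (prd t)) = (\<Sum>a\<in>L. real (card (P a - X a)) * b a)"
      using fin labels by (subst sum_group_by_label[where L = L]) (auto simp: N_def)
    also have "\<dots> \<le> (\<Sum>a\<in>L. (real (cap a) - real (card (P a \<inter> X a))) * b a)"
    proof (intro sum_mono mult_right_mono)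
      fix a assume "a \<in> L"
      have "card (P a \<inter> X a) + card (P a - X a) = card (P a)"
        using finP by (metis card_Int_Diff)
      then show "real (card (P a - X a)) \<le> real (cap a) - real (card (P a \<inter> X a))"
        using cap \<open>a \<in> L\<close> unfolding P_def by fastforce
      show "0 \<le> b a" using b_nonneg \<open>a \<in> L\<close> by blast
    qed
    finally show ?thesis .
  qed
  moreover have "(\<Sum>t\<in>N. h (asg t) t) = (\<Sum>a\<in>L. \<Sum>t \<in> X a - P a. h a t)"
  proof -
    have "{t\<in>N. asg t = a} = X a - P a" for a by (auto simp: N_def P_def X_def)
    then show ?thesis
      using fin labels by (subst sum_group_by_label[where L = L]) (auto simp: N_def)
  qed
  ultimately show ?thesis
    by (simp add: sum.distrib sum_distrib_left)
qed

lemma ea_run_update: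
  assumes "ea_run \<alpha> k T B w prd asg S" "t \<in> {1..T}"
  shows "S t a = (if a = asg t then add_drop_min (w a t) (S (t - 1) a) else S (t - 1) a)"
  using assms unfolding ea_run_def by blast

lemma ea_run_deviation:
  assumes "ea_run \<alpha> k T B w prd asg S" "t \<in> {1..T}" "asg t \<noteq> prd t"
  shows "asg t \<le> k"
    and "alphaB \<alpha> (Min (B ` {1..k})) * (w (prd t) t - beta_of \<alpha> (B (prd t)) (S (t - 1) (prd t)))
      < w (asg t) t - beta_of \<alpha> (B (asg t)) (S (t - 1) (asg t))"
proof -
  obtain aE where "aE \<le> k"
    and rule: "asg t = (if alphaB \<alpha> (Min (B ` {1..k})) *
          (w (prd t) t - beta_of \<alpha> (B (prd t)) (S (t - 1) (prd t)))
        \<ge> w aE t - beta_of \<alpha> (B aE) (S (t - 1) aE) then prd t else aE)"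
    using assms(1,2) unfolding ea_run_def by blast
  then show "asg t \<le> k" "alphaB \<alpha> (Min (B ` {1..k})) *
        (w (prd t) t - beta_of \<alpha> (B (prd t)) (S (t - 1) (prd t)))
      < w (asg t) t - beta_of \<alpha> (B (asg t)) (S (t - 1) (asg t))"
    using \<open>aE \<le> k\<close> rule assms(3) by (auto split: if_splits)
qed

lemma ea_run_held_values:
  assumes run: "ea_run \<alpha> k T B w prd asg S" and w_nonneg: "\<forall>a t. 0 \<le> w a t" and "t \<le> T"
  shows "size (S t a) = B a \<and> (\<forall>x\<in>#S t a. 0 \<le> x)"
  using \<open>t \<le> T\<close>
proof (induction t)
  case 0
  then show ?case using run unfolding ea_run_def by simp
next
  case (Suc t)
  then show ?case
    using ea_run_update[OF run, of "Suc t" a] set_mset_add_drop_min[of "w a (Suc t)" "S t a"] w_nonneg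
    by auto
qed

lemma ea_run_beta_mono:
  assumes run: "ea_run \<alpha> k T B w prd asg S" and w_nonneg: "\<forall>a t. 0 \<le> w a t" and "0 \<le> \<alpha>"
    and "s \<le> t" "t \<le> T"
  shows "beta_of \<alpha> (B a) (S s a) \<le> beta_of \<alpha> (B a) (S t a)"
  using \<open>s \<le> t\<close> \<open>t \<le> T\<close>
proof (induction t rule: dec_induct)
  case (step t)
  have "beta_of \<alpha> (B a) (S t a) \<le> beta_of \<alpha> (B a) (S (Suc t) a)"
    using ea_run_update[OF run, of "Suc t" a] ea_run_held_values[OF run w_nonneg, of t a] step.prems
    by (auto intro!: beta_of_mono[OF \<open>0 \<le> \<alpha>\<close>] sorted_list_of_multiset_add_drop_min_ge)
  then show ?case using step by simp
qed simp

lemma ea_run_prediction_value_le: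
  assumes run: "ea_run \<alpha> k T B w prd asg S" and w_nonneg: "\<forall>a t. 0 \<le> w a t" and "0 \<le> \<alpha>"
    and c_pos: "0 < alphaB \<alpha> (Min (B ` {1..k}))"
    and t: "t \<in> {1..T}" "asg t \<noteq> prd t"
  shows "w (prd t) t \<le> beta_of \<alpha> (B (prd t)) (S T (prd t))
    + 1 / alphaB \<alpha> (Min (B ` {1..k})) * (w (asg t) t - beta_of \<alpha> (B (asg t)) (S (t - 1) (asg t)))"
proof -
  have "w (prd t) t - beta_of \<alpha> (B (prd t)) (S (t - 1) (prd t))
      < 1 / alphaB \<alpha> (Min (B ` {1..k})) * (w (asg t) t - beta_of \<alpha> (B (asg t)) (S (t - 1) (asg t)))"
    using ea_run_deviation(2)[OF run t] c_pos by (simp add: pos_less_divide_eq mult.commute)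
  moreover have "beta_of \<alpha> (B (prd t)) (S (t - 1) (prd t)) \<le> beta_of \<alpha> (B (prd t)) (S T (prd t))"
    using t \<open>0 \<le> \<alpha>\<close> by (intro ea_run_beta_mono[OF run w_nonneg]) auto
  ultimately show ?thesis by linarith
qed

theorem lemmaA2:
  fixes \<alpha> :: real and k T :: nat and B :: "nat \<Rightarrow> nat" and w :: "nat \<Rightarrow> nat \<Rightarrow> real"
    and prd asg :: "nat \<Rightarrow> nat" and S :: "nat \<Rightarrow> nat \<Rightarrow> real multiset"
  assumes alpha: "\<alpha> \<ge> 1"
    and k: "k \<ge> 1"
    and budgets: "\<forall>a \<in> {1..k}. B a \<ge> 1"
    and dummy_budget: "B 0 \<ge> T"
    and w_nonneg: "\<forall>a t. w a t \<ge> 0"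
    and w_dummy: "\<forall>t. w 0 t = 0"
    and prd_range: "\<forall>t \<in> {1..T}. prd t \<le> k"
    and prd_feasible: "\<forall>a \<in> {1..k}. card {t \<in> {1..T}. prd t = a} \<le> B a"
    and run: "ea_run \<alpha> k T B w prd asg S"
  shows "(\<Sum>t = 1..T. w (prd t) t) \<le>
    (\<Sum>a = 0..k.
       (real (B a) - real (card ({t \<in> {1..T}. prd t = a} \<inter> {t \<in> {1..T}. asg t = a})))
         * beta_of \<alpha> (B a) (S T a)
       + 1 / alphaB \<alpha> (Min (B ` {1..k})) *
           (\<Sum>t \<in> {t \<in> {1..T}. asg t = a} - {t \<in> {1..T}. prd t = a}.
              w a t - beta_of \<alpha> (B a) (S (t - 1) a))
       + (\<Sum>t \<in> {t \<in> {1..T}. prd t = a} \<inter> {t \<in> {1..T}. asg t = a}. w a t))"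
proof (rule sum_prediction_le_charges)
  let ?c = "alphaB \<alpha> (Min (B ` {1..k}))"
  have "Min (B ` {1..k}) \<in> B ` {1..k}" using k by (intro Min_in) auto
  then have "0 < ?c" using budgets alpha by (auto intro: alphaB_pos)
  show "\<forall>t\<in>{1..T}. asg t \<noteq> prd t \<longrightarrow> w (prd t) t \<le> beta_of \<alpha> (B (prd t)) (S T (prd t))
      + 1 / ?c * (w (asg t) t - beta_of \<alpha> (B (asg t)) (S (t - 1) (asg t)))"
    using ea_run_prediction_value_le[OF run w_nonneg _ \<open>0 < ?c\<close>] alpha by simp
  show "\<forall>t\<in>{1..T}. asg t \<in> {0..k}"
    using ea_run_deviation(1)[OF run] prd_range by (metis atLeastAtMost_iff le0)
  show "\<forall>a\<in>{0..k}. card {t \<in> {1..T}. prd t = a} \<le> B a"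
  proof
    fix a assume "a \<in> {0..k}"
    show "card {t \<in> {1..T}. prd t = a} \<le> B a"
    proof (cases "a = 0")
      case True
      have "card {t \<in> {1..T}. prd t = a} \<le> card {1..T}" by (intro card_mono) auto
      then show ?thesis using True dummy_budget by simp
    next
      case False
      then show ?thesis using prd_feasible \<open>a \<in> {0..k}\<close> by simp
    qed
  qed
  show "\<forall>a\<in>{0..k}. 0 \<le> beta_of \<alpha> (B a) (S T a)"
    using alpha ea_run_held_values[OF run w_nonneg, of T] by (intro ballI beta_of_nonneg) auto
qed (simp_all add: prd_range)

end
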